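(* Let $N\ge 1$, let $\mathcal{L}_e$ be a finite index set of size $L_e$, and for each $\ell\in\mathcal{L}_e$ let $\mathbf{a}_\ell\in\mathbb{R}^N$ and $r_\ell>0$, $x_\ell>0$ be given. For $\mathbf{b}=(b_\ell)_{\ell\in\mathcal{L}_e}\in\mathbb{R}^{L_e}$ define $$\mathbf{R}^{-1}(\mathbf{b})=\frac12\sum_{\ell\in\mathcal{L}_e}\frac{b_\ell}{r_\ell}\mathbf{a}_\ell\mathbf{a}_\ell^\top,\qquad \mathbf{X}^{-1}(\mathbf{b})=\frac12\sum_{\ell\in\mathcal{L}_e}\frac{b_\ell}{x_\ell}\mathbf{a}_\ell\mathbf{a}_\ell^\top,$$ and, whenever these two matrices are invertible, let $\mathbf{R}(\mathbf{b}),\mathbf{X}(\mathbf{b})$ denote their inverses. Let $\boldsymbol{\Sigma}_p,\boldsymbol{\Sigma}_q\in\mathbb{R}^{N\times N}$ be symmetric, $\boldsymbol{\Sigma}_{pq}\in\mathbb{R}^{N\times N}$, $\sigma_n^2\ge 0$, and $$\boldsymbol{\Sigma}(\mathbf{b})=\mathbf{R}(\mathbf{b})\boldsymbol{\Sigma}_p\mathbf{R}(\mathbf{b})+\mathbf{X}(\mathbf{b})\boldsymbol{\Sigma}_q\mathbf{X}(\mathbf{b})+\mathbf{R}(\mathbf{b})\boldsymbol{\Sigma}_{pq}\mathbf{X}(\mathbf{b})+\mathbf{X}(\mathbf{b})\boldsymbol{\Sigma}_{pq}^\top\mathbf{R}(\mathbf{b})+\sigma_n^2\mathbf{I}_N.$$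 Let $\hat{\boldsymbol{\Sigma}}\in\mathbb{R}^{N\times N}$ be symmetric positive semidefinite and $f(\mathbf{b})=\log|\boldsymbol{\Sigma}(\mathbf{b})|+\operatorname{trace}(\boldsymbol{\Sigma}^{-1}(\mathbf{b})\hat{\boldsymbol{\Sigma}})$. Then at any $\mathbf{b}$ where $\mathbf{R}(\mathbf{b})$, $\mathbf{X}(\mathbf{b})$ exist and $\boldsymbol{\Sigma}(\mathbf{b})\succ 0$, for every $\ell\in\mathcal{L}_e$, $$\frac{\partial f(\mathbf{b})}{\partial b_\ell}=-\frac{1}{r_\ell}\mathbf{a}_\ell^\top\mathbf{R}\boldsymbol{\Sigma}_p\mathbf{R}\mathbf{F}\mathbf{R}\mathbf{a}_\ell-\frac{1}{x_\ell}\mathbf{a}_\ell^\top\mathbf{X}\boldsymbol{\Sigma}_q\mathbf{X}\mathbf{F}\mathbf{X}\mathbf{a}_\ell-\frac{1}{r_\ell}\mathbf{a}_\ell^\top\mathbf{R}\boldsymbol{\Sigma}_{pq}\mathbf{X}\mathbf{F}\mathbf{R}\mathbf{a}_\ell-\frac{1}{x_\ell}\mathbf{a}_\ell^\top\mathbf{X}\mathbf{F}\mathbf{R}\boldsymbol{\Sigma}_{pq}\mathbf{X}\mathbf{a}_\ell,$$ where $\mathbf{R}=\mathbf{R}(\mathbf{b})$, $\mathbf{X}=\mathbf{X}(\mathbf{b})$ and $\mathbf{F}=\mathbf{F}(\mathbf{b}):=\boldsymbol{\Sigma}^{-1}(\mathbf{b})-\boldsymbol{\Sigma}^{-1}(\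mathbf{b})\hat{\boldsymbol{\Sigma}}\boldsymbol{\Sigma}^{-1}(\mathbf{b})$.
   Context: $|\cdot|$ denotes the determinant. In the application, $\mathbf{a}_\ell^\top$ are rows of a reduced branch-bus incidence matrix of a distribution grid (substation column removed), $r_\ell,x_\ell$ are line resistances and reactances, $\mathbf{b}$ is a line-status indicator vector, $\boldsymbol{\Sigma}_p=\mathbb{E}[\tilde{\mathbf p}\tilde{\mathbf p}^\top]$, $\boldsymbol{\Sigma}_q=\mathbb{E}[\tilde{\mathbf q}\tilde{\mathbf q}^\top]$, $\boldsymbol{\Sigma}_{pq}=\mathbb{E}[\tilde{\mathbf p}\tilde{\mathbf q}^\top]$ are covariances of differential active/reactive power injections, and $\hat{\boldsymbol{\Sigma}}$ is the sample covariance of differential squared-voltage data. *)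

theory Defs
  imports "HOL-Analysis.Analysis"
begin

definition outer :: "real^'n \<Rightarrow> real^'n^'n" where
  "outer u = (\<chi> i j. u $ i * u $ j)"

definition Rinv :: "('l::finite \<Rightarrow> real^'n) \<Rightarrow> ('l \<Rightarrow> real) \<Rightarrow> real^'l \<Rightarrow> real^'n^'n" where
  "Rinv a r b = (1/2) *\<^sub>R (\<Sum>l\<in>UNIV. (b $ l / r l) *\<^sub>R outer (a l))"

definition Xinv :: "('l::finite \<Rightarrow> real^'n) \<Rightarrow> ('l \<Rightarrow> real) \<Rightarrow> real^'l \<Rightarrow> real^'n^'n" where
  "Xinv a x b = (1/2) *\<^sub>R (\<Sum>l\<in>UNIV. (b $ l / x l) *\<^sub>R outer (a l))"

definition SigmaM :: "('l::finite \<Rightarrow> real^'n) \<Rightarrow> ('l \<Rightarrow> real) \<Rightarrow> ('l \<Rightarrow> real)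
   \<Rightarrow> real^'n^'n \<Rightarrow> real^'n^'n \<Rightarrow> real^'n^'n \<Rightarrow> real \<Rightarrow> real^'l \<Rightarrow> real^'n^'n" where
  "SigmaM a r x Sp Sq Spq sn2 b =
     (let R = matrix_inv (Rinv a r b); X = matrix_inv (Xinv a x b) in
      R ** Sp ** R + X ** Sq ** X + R ** Spq ** X + X ** transpose Spq ** R + sn2 *\<^sub>R mat 1)"

definition fobj :: "('l::finite \<Rightarrow> real^'n) \<Rightarrow> ('l \<Rightarrow> real) \<Rightarrow> ('l \<Rightarrow> real)
   \<Rightarrow> real^'n^'n \<Rightarrow> real^'n^'n \<Rightarrow> real^'n^'n \<Rightarrow> real \<Rightarrow> real^'n^'n \<Rightarrow> real^'l \<Rightarrow> real" where
  "fobj a r x Sp Sq Spq sn2 Sh b =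
     (let S = SigmaM a r x Sp Sq Spq sn2 b in ln (det S) + trace (matrix_inv S ** Sh))"

definition pos_def :: "real^'n^'n \<Rightarrow> bool" where
  "pos_def M \<longleftrightarrow> transpose M = M \<and> (\<forall>v. v \<noteq> 0 \<longrightarrow> v \<bullet> (M *v v) > 0)"

definition pos_semidef :: "real^'n^'n \<Rightarrow> bool" where
  "pos_semidef M \<longleftrightarrow> transpose M = M \<and> (\<forall>v. v \<bullet> (M *v v) \<ge> 0)"

end

theory Submission
  imports Defs
begin

text \<open>Along the coordinate line \<open>b + t e\<^sub>l\<close> both \<open>R\<^sup>-\<^sup>1\<close> and \<open>X\<^sup>-\<^sup>1\<close> move affinely in the
  direction of the rank-one matrix \<open>a\<^sub>l a\<^sub>l\<^sup>T\<close>, so the derivative of the inverse gives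
  \<open>R' = -(1/(2 r\<^sub>l)) R a\<^sub>l a\<^sub>l\<^sup>T R\<close> and likewise \<open>X'\<close>. Jacobi's formula for \<open>ln det\<close> together with
  the derivative of \<open>\<Sigma>\<^sup>-\<^sup>1\<close> turns the derivative of \<open>f\<close> into \<open>trace (F \<Sigma>')\<close>. By the product rule
  and the symmetry of all factors except \<open>\<Sigma>\<^sub>p\<^sub>q\<close>, \<open>\<Sigma>' = T + T\<^sup>T\<close> for an explicit \<open>T\<close>, and as \<open>F\<close> is
  symmetric, \<open>trace (F \<Sigma>') = 2 trace (F T)\<close>. Each of the four terms of \<open>T\<close> contains the factor
  \<open>a\<^sub>l a\<^sub>l\<^sup>T\<close>, which turns its trace into a quadratic form in \<open>a\<^sub>l\<close>.\<close>

lemma matrix_diff_rdistrib: "((A::real^'n^'m) - B) ** C = A ** C - B ** C"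
  by (simp add: matrix_matrix_mult_def vec_eq_iff algebra_simps sum_subtractf)

lemma matrix_neg_left: "(- (A::real^'n^'m)) ** C = - (A ** C)"
  by (simp add: matrix_matrix_mult_def vec_eq_iff sum_negf)

lemma matrix_neg_right: "(A::real^'n^'m) ** (- C) = - (A ** C)"
  by (simp add: matrix_matrix_mult_def vec_eq_iff sum_negf)

lemma transpose_add: "transpose ((A::real^'n^'m) + B) = transpose A + transpose B"
  by (simp add: transpose_def vec_eq_iff)

lemma transpose_diff: "transpose ((A::real^'n^'m) - B) = transpose A - transpose B"
  by (simp add: transpose_def vec_eq_iff)

lemma transpose_outer: "transpose (outer u) = outer u"
  by (simp add: outer_def transpose_def vec_eq_iff mult.commute)

lemma trace_scaleR: "trace ((c::real) *\<^sub>R (A::real^'n^'n)) = c * trace A"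
  by (simp add: trace_def sum_distrib_left)

lemma trace_neg: "trace (- (A::real^'n^'n)) = - trace A"
  by (simp add: trace_def sum_negf)

lemma trace_transpose: "trace (transpose (A::real^'n^'n)) = trace A"
  by (simp add: trace_def transpose_def)

lemma trace_mult_add_transpose:
  fixes F T :: "real^'n^'n"
  assumes "transpose F = F"
  shows "trace (F ** (T + transpose T)) = 2 * trace (F ** T)"
proof -
  have "trace (F ** transpose T) = trace (transpose (T ** F))"
    by (simp add: matrix_transpose_mul assms)
  also have "\<dots> = trace (T ** F)"
    by (rule trace_transpose)
  also have "\<dots> = trace (F ** T)"
    by (rule trace_mul_sym)
  finally show ?thesis
    by (simp add: matrix_add_ldistrib trace_add)
qed

lemma trace_outer: "trace ((A::real^'n^'n) ** outer u ** B) = u \<bullet> ((B ** A) *v u)"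
proof -
  have "trace ((A ** outer u) ** B) = trace (B ** (A ** outer u))"
    by (rule trace_mul_sym)
  then have "trace (A ** outer u ** B) = trace ((B ** A) ** outer u)"
    by (simp add: matrix_mul_assoc)
  also have "\<dots> = u \<bullet> ((B ** A) *v u)"
    by (simp add: trace_def matrix_matrix_mult_def outer_def inner_vec_def matrix_vector_mult_def
        sum_distrib_left mult_ac)
  finally show ?thesis .
qed

lemma matrix_inv_mult_eq_mat_1:
  fixes A :: "real^'n^'n"
  assumes "invertible A"
  shows matrix_inv_right: "A ** matrix_inv A = mat 1"
    and matrix_inv_left: "matrix_inv A ** A = mat 1"
proof -
  have "\<exists>A'. A ** A' = mat 1 \<and> A' ** A = mat 1"
    using assms by (simp add: invertible_def)
  then have "A ** matrix_inv A = mat 1 \<and> matrix_inv A ** A = mat 1"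
    unfolding matrix_inv_def by (rule someI_ex)
  then show "A ** matrix_inv A = mat 1" "matrix_inv A ** A = mat 1"
    by auto
qed

lemma transpose_matrix_inv_symmetric:
  fixes A :: "real^'n^'n"
  assumes "invertible A" and "transpose A = A"
  shows "transpose (matrix_inv A) = matrix_inv A"
proof -
  have "transpose (matrix_inv A) ** A = mat 1"
    by (metis assms matrix_transpose_mul matrix_inv_right transpose_mat)
  then have "transpose (matrix_inv A) = transpose (matrix_inv A) ** (A ** matrix_inv A)"
    by (simp add: matrix_inv_right[OF assms(1)])
  also have "\<dots> = matrix_inv A"
    by (simp add: matrix_mul_assoc \<open>transpose (matrix_inv A) ** A = mat 1\<close>)
  finally show ?thesis .
qed

lemma pos_def_invertible:
  fixes M :: "real^'n^'n"
  assumes "pos_def M"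
  shows "invertible M"
proof -
  have "inj ((*v) M)"
  proof (rule injI)
    fix u v assume "M *v u = M *v v"
    then have "M *v (u - v) = 0"
      by (simp add: matrix_vector_mult_diff_distrib)
    then have "u - v = 0"
      using assms unfolding pos_def_def by (metis inner_zero_right less_irrefl)
    then show "u = v"
      by simp
  qed
  then show ?thesis
    using invertible_left_inverse matrix_left_invertible_injective by blast
qed

lemma matrix_inv_cramer:
  fixes A :: "real^'n^'n"
  assumes "invertible A"
  shows "matrix_inv A $ k $ j = det (\<chi> i j'. if j' = k then axis j 1 $ i else A $ i $ j') / det A"
proof -
  have "det A \<noteq> 0"
    using assms invertible_det_nz by blast
  moreover have "A *v (matrix_inv A *v axis j 1) = axis j 1"
    by (simp add: matrix_vector_mul_assoc matrix_inv_right[OF assms])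
  ultimately have "matrix_inv A *v axis j 1 =
      (\<chi> k. det (\<chi> i j'. if j' = k then axis j 1 $ i else A $ i $ j') / det A)"
    using cramer by blast
  moreover have "(matrix_inv A *v axis j 1) $ k = matrix_inv A $ k $ j"
    by (simp add: matrix_vector_mult_def axis_def if_distrib cong: if_cong)
  ultimately show ?thesis
    by simp
qed

section \<open>Entrywise derivatives of matrix-valued functions\<close>

definition has_matrix_derivative :: "(real \<Rightarrow> real^'n^'m) \<Rightarrow> real^'n^'m \<Rightarrow> real \<Rightarrow> bool" where
  "has_matrix_derivative M D s \<longleftrightarrow> (\<forall>i j. ((\<lambda>t. M t $ i $ j) has_real_derivative D $ i $ j) (at s))"

lemma has_matrix_derivative_const: "has_matrix_derivative (\<lambda>t. A) 0 s"
  by (simp add: has_matrix_derivative_def)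

lemma has_matrix_derivative_affine: "has_matrix_derivative (\<lambda>t. A + t *\<^sub>R B) B s"
  unfolding has_matrix_derivative_def by (auto intro!: derivative_eq_intros)

lemma has_matrix_derivative_add:
  "has_matrix_derivative M D s \<Longrightarrow> has_matrix_derivative N E s \<Longrightarrow>
   has_matrix_derivative (\<lambda>t. M t + N t) (D + E) s"
  unfolding has_matrix_derivative_def by (auto intro!: derivative_eq_intros)

lemma has_matrix_derivative_mult:
  "has_matrix_derivative M D s \<Longrightarrow> has_matrix_derivative N E s \<Longrightarrow>
   has_matrix_derivative (\<lambda>t. (M t :: real^'k^'m) ** (N t :: real^'n^'k)) (D ** N s + M s ** E) s"
  unfolding has_matrix_derivative_def matrix_matrix_mult_def
  by (auto intro!: derivative_eq_intros DERIV_sum simp: sum.distrib mult.commute)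

lemma has_matrix_derivative_mult_left:
  "has_matrix_derivative N E s \<Longrightarrow>
   has_matrix_derivative (\<lambda>t. (C :: real^'k^'m) ** (N t :: real^'n^'k)) (C ** E) s"
  using has_matrix_derivative_mult[OF has_matrix_derivative_const, of N E s C] by simp

lemma has_matrix_derivative_mult_right:
  "has_matrix_derivative M D s \<Longrightarrow>
   has_matrix_derivative (\<lambda>t. (M t :: real^'k^'m) ** (C :: real^'n^'k)) (D ** C) s"
  using has_matrix_derivative_mult[OF _ has_matrix_derivative_const, of M D s C] by simp

lemma has_matrix_derivative_unique:
  "has_matrix_derivative M D s \<Longrightarrow> has_matrix_derivative M E s \<Longrightarrow> D = E"
  unfolding has_matrix_derivative_def vec_eq_iff using DERIV_unique by blast

lemma has_matrix_derivative_transform_eventually: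
  assumes "has_matrix_derivative M D s" and "eventually (\<lambda>t. M t = N t) (nhds s)"
  shows "has_matrix_derivative N D s"
  unfolding has_matrix_derivative_def
proof (intro allI)
  fix i j
  have "eventually (\<lambda>t. M t $ i $ j = N t $ i $ j) (nhds s)"
    using assms(2) by (rule eventually_mono) simp
  then show "((\<lambda>t. N t $ i $ j) has_real_derivative D $ i $ j) (at s)"
    using assms(1) DERIV_cong_ev[of s s "\<lambda>t. M t $ i $ j" "\<lambda>t. N t $ i $ j"]
    unfolding has_matrix_derivative_def by blast
qed

lemma trace_has_real_derivative:
  "has_matrix_derivative M D s \<Longrightarrow> ((\<lambda>t. trace (M t)) has_real_derivative trace D) (at s)"
  unfolding has_matrix_derivative_def trace_def by (intro DERIV_sum) blast

lemma det_has_real_derivative_leibniz: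
  fixes M :: "real \<Rightarrow> real^'n^'n"
  assumes "has_matrix_derivative M D s"
  shows "((\<lambda>t. det (M t)) has_real_derivative
     (\<Sum>p | p permutes (UNIV::'n set). of_int (sign p) *
        (\<Sum>i\<in>UNIV. D $ i $ p i * (\<Prod>k\<in>UNIV - {i}. M s $ k $ p k)))) (at s)"
  unfolding det_def
  using assms unfolding has_matrix_derivative_def
  by (intro DERIV_sum DERIV_cmult has_field_derivative_prod) blast

lemma prod_mat_1_permutation:
  fixes p :: "'n::finite \<Rightarrow> 'n"
  assumes "p permutes UNIV" and "p \<noteq> id"
  shows "(\<Prod>k\<in>UNIV - {i}. (mat 1 :: real^'n^'n) $ k $ p k) = 0"
proof -
  obtain k where k: "p k \<noteq> k"
    using assms(2) by (auto simp: fun_eq_iff)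
  then have "p (p k) \<noteq> p k"
    using assms(1) by (metis permutes_inj injD)
  have "\<exists>k\<in>UNIV - {i}. (mat 1 :: real^'n^'n) $ k $ p k = 0"
  proof (cases "k = i")
    case True
    then show ?thesis
      using k \<open>p (p k) \<noteq> p k\<close> by (intro bexI[of _ "p k"]) (auto simp: mat_def)
  next
    case False
    then show ?thesis
      using k by (intro bexI[of _ k]) (auto simp: mat_def)
  qed
  then show ?thesis
    by (simp add: prod_zero_iff)
qed

\<comment> \<open>Only the identity permutation contributes to the Leibniz expansion at the identity.\<close>
lemma det_has_real_derivative_at_mat_1:
  fixes M :: "real \<Rightarrow> real^'n^'n"
  assumes "has_matrix_derivative M D s" and "M s = mat 1"
  shows "((\<lambda>t. det (M t)) has_real_derivative trace D) (at s)"
proof -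
  let ?P = "{p. p permutes (UNIV::'n set)}"
  let ?g = "\<lambda>p. of_int (sign p) * (\<Sum>i\<in>UNIV. D $ i $ p i * (\<Prod>k\<in>UNIV - {i}. M s $ k $ p k))"
  have "sum ?g ?P = ?g id + sum ?g (?P - {id})"
    by (rule sum.remove) (simp_all add: finite_permutations permutes_id)
  also have "sum ?g (?P - {id}) = 0"
    by (rule sum.neutral) (auto simp: assms(2) prod_mat_1_permutation)
  also have "?g id = trace D"
    by (simp add: assms(2) trace_def mat_def)
  finally show ?thesis
    using det_has_real_derivative_leibniz[OF assms(1)] by simp
qed

lemma det_has_real_derivative:
  fixes M :: "real \<Rightarrow> real^'n^'n"
  assumes "has_matrix_derivative M D s" and "invertible (M s)"
  shows "((\<lambda>t. det (M t)) has_real_derivative det (M s) * trace (matrix_inv (M s) ** D)) (at s)"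
proof -
  let ?Mi = "matrix_inv (M s)"
  have det_factor: "det (M t) = det (M s) * det (?Mi ** M t)" for t
  proof -
    have "M t = M s ** (?Mi ** M t)"
      by (simp add: matrix_mul_assoc matrix_inv_right[OF assms(2)])
    then show ?thesis
      by (metis det_mul)
  qed
  have "((\<lambda>t. det (?Mi ** M t)) has_real_derivative trace (?Mi ** D)) (at s)"
    using has_matrix_derivative_mult_left[OF assms(1)] matrix_inv_left[OF assms(2)]
    by (rule det_has_real_derivative_at_mat_1)
  then have "((\<lambda>t. det (M s) * det (?Mi ** M t)) has_real_derivative
      det (M s) * trace (?Mi ** D)) (at s)"
    by (rule DERIV_cmult)
  then show ?thesis
    by (simp only: det_factor[symmetric])
qed

lemma eventually_det_nonzero:
  fixes M :: "real \<Rightarrow> real^'n^'n"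
  assumes "has_matrix_derivative M D s" and "invertible (M s)"
  shows "eventually (\<lambda>t. det (M t) \<noteq> 0) (nhds s)"
proof -
  have "isCont (\<lambda>t. det (M t)) s"
    using det_has_real_derivative[OF assms] DERIV_isCont by blast
  then have "((\<lambda>t. det (M t)) \<longlongrightarrow> det (M s)) (nhds s)"
    unfolding isCont_def using tendsto_at_iff_tendsto_nhds[of "\<lambda>t. det (M t)" s] by simp
  moreover have "det (M s) \<noteq> 0"
    using assms(2) invertible_det_nz by blast
  ultimately show ?thesis
    by (rule tendsto_imp_eventually_ne)
qed

\<comment> \<open>By Cramer's rule every entry of the inverse is a quotient of differentiable determinants.\<close>
lemma matrix_inv_has_some_matrix_derivative:
  fixes M :: "real \<Rightarrow> real^'n^'n"
  assumes M': "has_matrix_derivative M D s" and inv: "invertible (M s)"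
  shows "\<exists>E. has_matrix_derivative (\<lambda>t. matrix_inv (M t)) E s"
proof -
  have "\<exists>g. ((\<lambda>t. matrix_inv (M t) $ k $ j) has_real_derivative g) (at s)" for k j
  proof -
    define C where "C = (\<lambda>t. (\<chi> i j'. if j' = k then axis j 1 $ i else M t $ i $ j') :: real^'n^'n)"
    have "has_matrix_derivative C (\<chi> i j'. if j' = k then 0 else D $ i $ j') s"
      using M' unfolding has_matrix_derivative_def C_def by auto
    then obtain c where c: "((\<lambda>t. det (C t)) has_real_derivative c) (at s)"
      using det_has_real_derivative_leibniz by blast
    obtain m where m: "((\<lambda>t. det (M t)) has_real_derivative m) (at s)"
      using det_has_real_derivative_leibniz[OF M'] by blast
    have "det (M s) \<noteq> 0"
      using inv invertible_det_nz by blast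
    then have quotient: "((\<lambda>t. det (C t) / det (M t)) has_real_derivative
        (c * det (M s) - det (C s) * m) / (det (M s) * det (M s))) (at s)"
      using DERIV_divide[OF c m] by simp
    have cramer_ev: "eventually (\<lambda>t. det (C t) / det (M t) = matrix_inv (M t) $ k $ j) (nhds s)"
      using eventually_det_nonzero[OF M' inv]
      by (rule eventually_mono) (simp add: C_def matrix_inv_cramer invertible_det_nz)
    show ?thesis
      using quotient unfolding DERIV_cong_ev[OF refl cramer_ev refl] by blast
  qed
  then obtain g where "\<And>k j. ((\<lambda>t. matrix_inv (M t) $ k $ j) has_real_derivative g k j) (at s)"
    by metis
  then have "has_matrix_derivative (\<lambda>t. matrix_inv (M t)) (\<chi> k j. g k j) s"
    unfolding has_matrix_derivative_def by simp
  then show ?thesis ..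
qed

lemma matrix_inv_has_matrix_derivative:
  fixes M :: "real \<Rightarrow> real^'n^'n"
  assumes M': "has_matrix_derivative M D s" and inv: "invertible (M s)"
  shows "has_matrix_derivative (\<lambda>t. matrix_inv (M t)) (- (matrix_inv (M s) ** D ** matrix_inv (M s))) s"
proof -
  let ?Mi = "matrix_inv (M s)"
  obtain E where E: "has_matrix_derivative (\<lambda>t. matrix_inv (M t)) E s"
    using matrix_inv_has_some_matrix_derivative[OF M' inv] ..
  \<comment> \<open>Differentiating the identity \<open>M t ** matrix_inv (M t) = mat 1\<close> determines \<open>E\<close>.\<close>
  have "has_matrix_derivative (\<lambda>t. M t ** matrix_inv (M t)) (D ** ?Mi + M s ** E) s"
    by (rule has_matrix_derivative_mult[OF M' E])
  moreover have "eventually (\<lambda>t. mat 1 = M t ** matrix_inv (M t)) (nhds s)"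
    using eventually_det_nonzero[OF M' inv]
    by (rule eventually_mono) (metis invertible_det_nz matrix_inv_right)
  then have "has_matrix_derivative (\<lambda>t. M t ** matrix_inv (M t)) 0 s"
    by (rule has_matrix_derivative_transform_eventually[OF has_matrix_derivative_const])
  ultimately have "D ** ?Mi + M s ** E = 0"
    by (rule has_matrix_derivative_unique)
  then have Ms_E: "M s ** E = - (D ** ?Mi)"
    by (simp add: eq_neg_iff_add_eq_0 add.commute)
  have "E = ?Mi ** (M s ** E)"
    by (simp add: matrix_mul_assoc matrix_inv_left[OF inv])
  also have "\<dots> = - (?Mi ** D ** ?Mi)"
    using Ms_E by (simp add: matrix_neg_right matrix_mul_assoc)
  finally show ?thesis
    using E by simp
qed

lemma has_matrix_derivative_sandwich:
  "has_matrix_derivative A DA s \<Longrightarrow> has_matrix_derivative B DB s \<Longrightarrow>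
   has_matrix_derivative (\<lambda>t. (A t :: real^'k^'m) ** (C :: real^'j^'k) ** (B t :: real^'n^'j))
     (DA ** C ** B s + A s ** C ** DB) s"
  using has_matrix_derivative_mult[OF has_matrix_derivative_mult_right] by fastforce

lemma ln_has_real_derivative_nonzero:
  assumes "(f has_real_derivative f') (at s)" and "f s \<noteq> 0"
  shows "((\<lambda>t. ln (f t)) has_real_derivative f' / f s) (at s)"
proof (cases "f s > 0")
  case True
  then show ?thesis
    using DERIV_chain2[OF DERIV_ln_divide[OF True] assms(1)] by simp
next
  case False
  with assms(2) have "- f s > 0"
    by simp
  from DERIV_chain2[OF DERIV_ln_divide[OF this] DERIV_minus[OF assms(1)]] show ?thesis
    by (simp add: ln_minus)
qed

\<comment> \<open>Jacobi's formula for \<open>ln det\<close> plus the derivative of the inverse; the two traces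
  combine because \<open>trace (Si ** S' ** Si ** H) = trace (Si ** H ** Si ** S')\<close>.\<close>
lemma ln_det_add_trace_inv_has_real_derivative:
  fixes S :: "real \<Rightarrow> real^'n^'n"
  assumes S': "has_matrix_derivative S D s" and inv: "invertible (S s)"
  shows "((\<lambda>t. ln (det (S t)) + trace (matrix_inv (S t) ** H)) has_real_derivative
    trace ((matrix_inv (S s) - matrix_inv (S s) ** H ** matrix_inv (S s)) ** D)) (at s)"
proof -
  let ?Si = "matrix_inv (S s)"
  have "det (S s) \<noteq> 0"
    using inv invertible_det_nz by blast
  then have ln_det: "((\<lambda>t. ln (det (S t))) has_real_derivative trace (?Si ** D)) (at s)"
    using ln_has_real_derivative_nonzero[OF det_has_real_derivative[OF S' inv]] by simp
  have tr_inv: "((\<lambda>t. trace (matrix_inv (S t) ** H)) has_real_derivative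
      trace (- (?Si ** D ** ?Si) ** H)) (at s)"
    by (intro trace_has_real_derivative has_matrix_derivative_mult_right
        matrix_inv_has_matrix_derivative S' inv)
  have "trace (?Si ** D ** ?Si ** H) = trace ((?Si ** D) ** (?Si ** H))"
    by (simp add: matrix_mul_assoc)
  also have "\<dots> = trace ((?Si ** H) ** (?Si ** D))"
    by (rule trace_mul_sym)
  finally have "trace (- (?Si ** D ** ?Si) ** H) = - trace (?Si ** H ** ?Si ** D)"
    by (simp add: matrix_neg_left trace_neg matrix_mul_assoc)
  then show ?thesis
    using DERIV_add[OF ln_det tr_inv] by (simp add: matrix_diff_rdistrib trace_sub)
qed

section \<open>The covariance model\<close>

definition voltage_cov :: "real^'n^'n \<Rightarrow> real^'n^'n \<Rightarrow> real^'n^'n \<Rightarrow> real^'n^'n \<Rightarrow> real^'n^'n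
    \<Rightarrow> real \<Rightarrow> real^'n^'n" where
  "voltage_cov R X Sp Sq Spq sn2 =
     R ** Sp ** R + X ** Sq ** X + R ** Spq ** X + X ** transpose Spq ** R + sn2 *\<^sub>R mat 1"

lemma SigmaM_eq_voltage_cov:
  "SigmaM a r x Sp Sq Spq sn2 b =
     voltage_cov (matrix_inv (Rinv a r b)) (matrix_inv (Xinv a x b)) Sp Sq Spq sn2"
  by (simp add: SigmaM_def voltage_cov_def Let_def)

lemma voltage_cov_has_matrix_derivative:
  assumes R': "has_matrix_derivative R DR s" and X': "has_matrix_derivative X DX s"
    and R_sym: "transpose (R s) = R s" and X_sym: "transpose (X s) = X s"
    and DR_sym: "transpose DR = DR" and DX_sym: "transpose DX = DX"
    and Sp_sym: "transpose Sp = Sp" and Sq_sym: "transpose Sq = Sq"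
  shows "has_matrix_derivative (\<lambda>t. voltage_cov (R t) (X t) Sp Sq Spq sn2)
    (let T = DR ** Sp ** R s + DX ** Sq ** X s + DR ** Spq ** X s + R s ** Spq ** DX
     in T + transpose T) s"
proof -
  have "has_matrix_derivative (\<lambda>t. voltage_cov (R t) (X t) Sp Sq Spq sn2)
    ((DR ** Sp ** R s + R s ** Sp ** DR) + (DX ** Sq ** X s + X s ** Sq ** DX)
     + (DR ** Spq ** X s + R s ** Spq ** DX) + (DX ** transpose Spq ** R s + X s ** transpose Spq ** DR)
     + 0) s"
    unfolding voltage_cov_def
    by (intro has_matrix_derivative_add has_matrix_derivative_sandwich R' X'
        has_matrix_derivative_const)
  then show ?thesis
    by (simp add: Let_def transpose_add matrix_transpose_mul matrix_mul_assoc
        R_sym X_sym DR_sym DX_sym Sp_sym Sq_sym add_ac)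
qed

definition sigma_half_derivative :: "real^'n^'n \<Rightarrow> real^'n^'n \<Rightarrow> real^'n^'n \<Rightarrow> real^'n^'n
    \<Rightarrow> real^'n^'n \<Rightarrow> real \<Rightarrow> real \<Rightarrow> real^'n \<Rightarrow> real^'n^'n" where
  "sigma_half_derivative R X Sp Sq Spq c d u =
     (c *\<^sub>R (R ** outer u ** R)) ** Sp ** R + (d *\<^sub>R (X ** outer u ** X)) ** Sq ** X
     + (c *\<^sub>R (R ** outer u ** R)) ** Spq ** X + R ** Spq ** (d *\<^sub>R (X ** outer u ** X))"

lemma trace_mult_sigma_half_derivative:
  fixes F R X Sp Sq Spq :: "real^'n^'n"
  shows "trace (F ** sigma_half_derivative R X Sp Sq Spq c d u)
    = c * (u \<bullet> ((R ** Sp ** R ** F ** R) *v u)) + d * (u \<bullet> ((X ** Sq ** X ** F ** X) *v u))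
      + c * (u \<bullet> ((R ** Spq ** X ** F ** R) *v u)) + d * (u \<bullet> ((X ** F ** R ** Spq ** X) *v u))"
proof -
  have "trace (F ** ((c *\<^sub>R (R ** outer u ** R)) ** Sp ** R)) = c * (u \<bullet> ((R ** Sp ** R ** F ** R) *v u))"
    using trace_outer[of "F ** R" u "R ** Sp ** R"]
    by (simp add: scalar_matrix_assoc[symmetric] matrix_scalar_ac trace_scaleR matrix_mul_assoc)
  moreover have "trace (F ** ((d *\<^sub>R (X ** outer u ** X)) ** Sq ** X)) = d * (u \<bullet> ((X ** Sq ** X ** F ** X) *v u))"
    using trace_outer[of "F ** X" u "X ** Sq ** X"]
    by (simp add: scalar_matrix_assoc[symmetric] matrix_scalar_ac trace_scaleR matrix_mul_assoc)
  moreover have "trace (F ** ((c *\<^sub>R (R ** outer u ** R)) ** Spq ** X)) = c * (u \<bullet> ((R ** Spq ** X ** F ** R) *v u))"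
    using trace_outer[of "F ** R" u "R ** Spq ** X"]
    by (simp add: scalar_matrix_assoc[symmetric] matrix_scalar_ac trace_scaleR matrix_mul_assoc)
  moreover have "trace (F ** (R ** Spq ** (d *\<^sub>R (X ** outer u ** X)))) = d * (u \<bullet> ((X ** F ** R ** Spq ** X) *v u))"
    using trace_outer[of "F ** R ** Spq ** X" u X]
    by (simp add: scalar_matrix_assoc[symmetric] matrix_scalar_ac trace_scaleR matrix_mul_assoc)
  ultimately show ?thesis
    by (simp add: sigma_half_derivative_def matrix_add_ldistrib trace_add)
qed

section \<open>Dependence on the line statuses\<close>

lemma Xinv_eq_Rinv: "Xinv = Rinv"
  by (simp add: fun_eq_iff Xinv_def Rinv_def)

lemma Rinv_symmetric: "transpose (Rinv a w b) = Rinv a w b"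
  by (simp add: Rinv_def transpose_def outer_def vec_eq_iff sum_component mult.commute)

lemma Rinv_add_axis:
  "Rinv a w (b + t *\<^sub>R axis l 1) = Rinv a w b + t *\<^sub>R ((1 / (2 * w l)) *\<^sub>R outer (a l))"
proof -
  have "(\<Sum>k\<in>UNIV. ((b + t *\<^sub>R axis l 1) $ k / w k) *\<^sub>R outer (a k))
      = (\<Sum>k\<in>UNIV. (b $ k / w k) *\<^sub>R outer (a k) + (if k = l then (t / w l) *\<^sub>R outer (a l) else 0))"
    by (rule sum.cong) (auto simp: axis_def add_divide_distrib scaleR_add_left)
  also have "\<dots> = (\<Sum>k\<in>UNIV. (b $ k / w k) *\<^sub>R outer (a k)) + (t / w l) *\<^sub>R outer (a l)"
    by (simp add: sum.distrib)
  finally show ?thesis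
    by (simp add: Rinv_def scaleR_add_right)
qed

lemma matrix_inv_Rinv_has_matrix_derivative:
  assumes "invertible (Rinv a w b)"
  shows "has_matrix_derivative (\<lambda>t. matrix_inv (Rinv a w (b + t *\<^sub>R axis l 1)))
    ((- 1 / (2 * w l)) *\<^sub>R (matrix_inv (Rinv a w b) ** outer (a l) ** matrix_inv (Rinv a w b))) 0"
proof -
  have "has_matrix_derivative (\<lambda>t. Rinv a w (b + t *\<^sub>R axis l 1)) ((1 / (2 * w l)) *\<^sub>R outer (a l)) 0"
    unfolding Rinv_add_axis by (rule has_matrix_derivative_affine)
  from matrix_inv_has_matrix_derivative[OF this] show ?thesis
    using assms by (simp add: matrix_scalar_ac scalar_matrix_assoc[symmetric])
qed

lemma SigmaM_along_axis_has_matrix_derivative: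
  assumes Sp_sym: "transpose Sp = Sp" and Sq_sym: "transpose Sq = Sq"
    and R_ex: "invertible (Rinv a r b)" and X_ex: "invertible (Xinv a x b)"
  shows "has_matrix_derivative (\<lambda>t. SigmaM a r x Sp Sq Spq sn2 (b + t *\<^sub>R axis l 1))
    (let T = sigma_half_derivative (matrix_inv (Rinv a r b)) (matrix_inv (Xinv a x b)) Sp Sq Spq
               (- 1 / (2 * r l)) (- 1 / (2 * x l)) (a l)
     in T + transpose T) 0"
proof -
  define R where "R = matrix_inv (Rinv a r b)"
  define X where "X = matrix_inv (Rinv a x b)"
  define DR where "DR = (- 1 / (2 * r l)) *\<^sub>R (R ** outer (a l) ** R)"
  define DX where "DX = (- 1 / (2 * x l)) *\<^sub>R (X ** outer (a l) ** X)"
  have R_sym: "transpose R = R" and X_sym: "transpose X = X"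
    using R_ex X_ex by (simp_all add: R_def X_def Xinv_eq_Rinv transpose_matrix_inv_symmetric Rinv_symmetric)
  then have DR_sym: "transpose DR = DR" and DX_sym: "transpose DX = DX"
    by (simp_all only: DR_def DX_def transpose_scalar matrix_transpose_mul transpose_outer matrix_mul_assoc)
  have DR': "has_matrix_derivative (\<lambda>t. matrix_inv (Rinv a r (b + t *\<^sub>R axis l 1))) DR 0"
    and DX': "has_matrix_derivative (\<lambda>t. matrix_inv (Rinv a x (b + t *\<^sub>R axis l 1))) DX 0"
    using matrix_inv_Rinv_has_matrix_derivative R_ex X_ex
    by (simp_all add: DR_def DX_def R_def X_def Xinv_eq_Rinv)
  show ?thesis
    using voltage_cov_has_matrix_derivative[OF DR' DX' _ _ DR_sym DX_sym Sp_sym Sq_sym] R_sym X_sym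
    by (simp add: SigmaM_eq_voltage_cov Xinv_eq_Rinv sigma_half_derivative_def R_def X_def DR_def DX_def)
qed

lemma transpose_inv_diff_inv_mult_inv:
  fixes S H :: "real^'n^'n"
  assumes "invertible S" and "transpose S = S" and "transpose H = H"
  shows "transpose (matrix_inv S - matrix_inv S ** H ** matrix_inv S) =
    matrix_inv S - matrix_inv S ** H ** matrix_inv S"
proof -
  have "transpose (matrix_inv S) = matrix_inv S"
    using assms(1,2) by (rule transpose_matrix_inv_symmetric)
  then show ?thesis
    by (simp add: transpose_diff matrix_transpose_mul assms(3) matrix_mul_assoc)
qed

theorem lemma1:
  fixes a :: "'l::finite \<Rightarrow> real^'n" and r x :: "'l \<Rightarrow> real"
    and Sp Sq Spq Sh :: "real^'n^'n" and sn2 :: real and b :: "real^'l" and l :: 'l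
  assumes r_pos: "\<And>k. r k > 0" and x_pos: "\<And>k. x k > 0"
    and Sp_sym: "transpose Sp = Sp" and Sq_sym: "transpose Sq = Sq"
    and sn2: "sn2 \<ge> 0"
    and Sh: "pos_semidef Sh"
    and R_ex: "invertible (Rinv a r b)" and X_ex: "invertible (Xinv a x b)"
    and S_pd: "pos_def (SigmaM a r x Sp Sq Spq sn2 b)"
  shows "let R = matrix_inv (Rinv a r b); X = matrix_inv (Xinv a x b);
             Si = matrix_inv (SigmaM a r x Sp Sq Spq sn2 b);
             F = Si - Si ** Sh ** Si
         in ((\<lambda>t. fobj a r x Sp Sq Spq sn2 Sh (b + t *\<^sub>R axis l 1)) has_real_derivative
              (- (1 / r l) * (a l \<bullet> ((R ** Sp ** R ** F ** R) *v a l))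
               - (1 / x l) * (a l \<bullet> ((X ** Sq ** X ** F ** X) *v a l))
               - (1 / r l) * (a l \<bullet> ((R ** Spq ** X ** F ** R) *v a l))
               - (1 / x l) * (a l \<bullet> ((X ** F ** R ** Spq ** X) *v a l)))) (at 0)"
proof -
  define R where "R = matrix_inv (Rinv a r b)"
  define X where "X = matrix_inv (Xinv a x b)"
  define Si where "Si = matrix_inv (SigmaM a r x Sp Sq Spq sn2 b)"
  define F where "F = Si - Si ** Sh ** Si"
  define T where "T = sigma_half_derivative R X Sp Sq Spq (- 1 / (2 * r l)) (- 1 / (2 * x l)) (a l)"
  let ?q = "\<lambda>M. a l \<bullet> (M *v a l)"
  have S_inv: "invertible (SigmaM a r x Sp Sq Spq sn2 b)"
    using S_pd by (rule pos_def_invertible)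
  have "transpose F = F"
    using S_pd Sh unfolding F_def Si_def pos_def_def pos_semidef_def
    by (intro transpose_inv_diff_inv_mult_inv S_inv) simp_all
  then have "trace (F ** (T + transpose T)) = 2 * trace (F ** T)"
    by (rule trace_mult_add_transpose)
  also have "trace (F ** T) =
      (- 1 / (2 * r l)) * ?q (R ** Sp ** R ** F ** R) + (- 1 / (2 * x l)) * ?q (X ** Sq ** X ** F ** X)
      + (- 1 / (2 * r l)) * ?q (R ** Spq ** X ** F ** R) + (- 1 / (2 * x l)) * ?q (X ** F ** R ** Spq ** X)"
    unfolding T_def by (rule trace_mult_sigma_half_derivative)
  finally have trace_eq: "trace (F ** (T + transpose T)) =
      - (1 / r l) * ?q (R ** Sp ** R ** F ** R) - (1 / x l) * ?q (X ** Sq ** X ** F ** X)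
      - (1 / r l) * ?q (R ** Spq ** X ** F ** R) - (1 / x l) * ?q (X ** F ** R ** Spq ** X)"
    by (simp add: algebra_simps)
  have S': "has_matrix_derivative (\<lambda>t. SigmaM a r x Sp Sq Spq sn2 (b + t *\<^sub>R axis l 1))
      (T + transpose T) 0"
    using SigmaM_along_axis_has_matrix_derivative[OF Sp_sym Sq_sym R_ex X_ex]
    by (simp add: T_def R_def X_def Let_def)
  have "((\<lambda>t. fobj a r x Sp Sq Spq sn2 Sh (b + t *\<^sub>R axis l 1)) has_real_derivative
      trace (F ** (T + transpose T))) (at 0)"
    using ln_det_add_trace_inv_has_real_derivative[OF S', of Sh] S_inv
    by (simp add: fobj_def Let_def Si_def F_def)
  then show ?thesis
    unfolding trace_eq by (simp only: Let_def R_def X_def Si_def F_def)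
qed

end
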